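(* Assume the first $i-1$ layers have been quantized and let $X^{(i-1)},\widetilde X^{(i-1)}\in\mathbb R^{m\times N_{i-1}}$ be the resulting activations (probabilities are conditional on these). Let $p,K^{(i)}\in\mathbb N$ with $p\ge3$ and $\delta>0$. Quantize $W^{(i)}$ using Algorithm 1 with alphabet $\mathcal A=\mathcal A_{K^{(i)}}^\delta$, and suppose the matrix $\widetilde W^{(i)}$ whose $j$-th column is the aligned vector $\widetilde w$ obtained from $w=W^{(i)}_j$ satisfies $\|\widetilde W^{(i)}\|_{\max}\le\frac12K^{(i)}\delta$. Then $$\max_{1\le j\le N_i}\|X^{(i-1)}W^{(i)}_j-\widetilde X^{(i-1)}Q^{(i)}_j\|_2\le\delta\sqrt{2\pi pm\log N_{i-1}}\max_{1\le j\le N_{i-1}}\|\widetilde X^{(i-1)}_j\|_2$$ holds with probability at least $$1-\frac{\sqrt2 mN_i}{N_{i-1}^p}-\sqrt2N_i\sum_{t=2}^{N_{i-1}}\exp\Bigl(-\frac{(K^{(i)})^2\|\widetilde X_t^{(i-1)}\|_2^2}{8\pi\max_{1\le j\le t-1}\|\widetilde X_j^{(i-1)}\|_2^2}\Bigr).$$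
   Context: $\rho(x)=\max\{0,x\}$; $X^{(0)}=\widetilde X^{(0)}=X$, $X^{(i)}=\rho(X^{(i-1)}W^{(i)})$, $\widetilde X^{(i)}=\rho(\widetilde X^{(i-1)}Q^{(i)})$, where $W^{(i)}\in\mathbb R^{N_{i-1}\times N_i}$ are the weights and $Q^{(i)}$ the quantized weights. $A_j$ is the $j$-th column of $A$; $\|A\|_{\max}=\max|A_{kl}|$; columns of $\widetilde X^{(i-1)}$ are nonzero. $\mathcal A_K^\delta=\{k\delta:k\in\mathbb Z,|k|\le K\}$. The stochastic quantizer for $\mathcal A_K^\delta$: if $|z|\le K\delta$, $\mathcal Q_{\mathrm{StocQ}}(z)$ equals $\lfloor z/\delta\rfloor\delta$ with probability $1-z/\delta+\lfloor z/\delta\rfloor$ and $(\lfloor z/\delta\rfloor+1)\delta$ otherwise; if $z>K\delta$ it is $K\delta$, if $z<-K\delta$ it is $-K\delta$; each call uses fresh independent randomness. Algorithm 1 for layer $i$: for each column $w=W^{(i)}_j$, let $\widetilde w$ minimize $\|z\|_\infty$ subject to $\widetilde X^{(i-1)}z=X^{(i-1)}w$; then with $\widetilde Y=\widetilde X^{(i-1)}$, $N=N_{i-1}$, run $\widetilde u_0=0$, $\widetilde q_t=\mathcal Q_{\mathrm{StocQ}}(\widetilde w_t+\langle\widetilde Y_t,\widetilde u_{t-1}\rangle/\|\widetilde Y_t\|_2^2)$, $\widetilde u_t=\widetilde u_{t-1}+(\widetilde w_t-\widetilde q_t)\widetilde Y_t$ for $t=1,\dots,N$, and set $Q^{(i)}_j=\widetilde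 q$. *)

theory Defs
  imports "HOL-Probability.Probability_Mass_Function"
begin

text \<open>Conventions: an m x n real matrix A is a function nat => nat => real,
  A k t = entry in row k (k < m), column t (t < n); indices are 0-based.
  Vectors of length n are functions nat => real used on indices < n.\<close>

definition alphabet :: "nat \<Rightarrow> real \<Rightarrow> real set" where
  "alphabet K \<delta> = {real_of_int k * \<delta> | k. \<bar>k\<bar> \<le> int K}"

definition stocq :: "nat \<Rightarrow> real \<Rightarrow> real \<Rightarrow> real pmf" where
  "stocq K \<delta> z =
     (if \<bar>z\<bar> \<le> real K * \<delta> then
        map_pmf (\<lambda>b. if b then (real_of_int \<lfloor>z / \<delta>\<rfloor> + 1) * \<delta>
                           else real_of_int \<lfloor>z / \<delta>\<rfloor> * \<delta>)
                (bernoulli_pmf (z / \<delta> - real_of_int \<lfloor>z / \<delta>\<rfloor>))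
      else if z > real K * \<delta> then return_pmf (real K * \<delta>)
      else return_pmf (- (real K * \<delta>)))"

definition col_sqnorm :: "nat \<Rightarrow> (nat \<Rightarrow> nat \<Rightarrow> real) \<Rightarrow> nat \<Rightarrow> real" where
  "col_sqnorm m Y t = (\<Sum>k<m. (Y k t)\<^sup>2)"

definition col_norm :: "nat \<Rightarrow> (nat \<Rightarrow> nat \<Rightarrow> real) \<Rightarrow> nat \<Rightarrow> real" where
  "col_norm m Y t = sqrt (col_sqnorm m Y t)"

definition inf_norm :: "nat \<Rightarrow> (nat \<Rightarrow> real) \<Rightarrow> real" where
  "inf_norm N z = Max ((\<lambda>t. \<bar>z t\<bar>) ` {..<N})"

definition is_aligned :: "nat \<Rightarrow> nat \<Rightarrow> (nat \<Rightarrow> nat \<Rightarrow> real) \<Rightarrow> (nat \<Rightarrow> nat \<Rightarrow> real)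
    \<Rightarrow> (nat \<Rightarrow> real) \<Rightarrow> (nat \<Rightarrow> real) \<Rightarrow> bool" where
  "is_aligned m N X Xt w wt \<longleftrightarrow>
     (\<forall>k<m. (\<Sum>t<N. Xt k t * wt t) = (\<Sum>t<N. X k t * w t)) \<and>
     (\<forall>z. (\<forall>k<m. (\<Sum>t<N. Xt k t * z t) = (\<Sum>t<N. X k t * w t))
            \<longrightarrow> inf_norm N wt \<le> inf_norm N z)"

text \<open>One step (step t+1 in 1-based numbering) of the stochastic path-following
  loop of Algorithm 1: state = (u_{t}, [q_1,...,q_t]).\<close>
definition stoc_step :: "nat \<Rightarrow> (nat \<Rightarrow> nat \<Rightarrow> real) \<Rightarrow> nat \<Rightarrow> real \<Rightarrow> (nat \<Rightarrow> real) \<Rightarrow> nat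
    \<Rightarrow> (nat \<Rightarrow> real) \<times> real list \<Rightarrow> ((nat \<Rightarrow> real) \<times> real list) pmf" where
  "stoc_step m Y K \<delta> w t = (\<lambda>(u, qs).
     map_pmf (\<lambda>q. (\<lambda>k. u k + (w t - q) * Y k t, qs @ [q]))
       (stocq K \<delta> (w t + (\<Sum>k<m. Y k t * u k) / col_sqnorm m Y t)))"

fun col_run :: "nat \<Rightarrow> (nat \<Rightarrow> nat \<Rightarrow> real) \<Rightarrow> nat \<Rightarrow> real \<Rightarrow> (nat \<Rightarrow> real) \<Rightarrow> nat
    \<Rightarrow> ((nat \<Rightarrow> real) \<times> real list) pmf" where
  "col_run m Y K \<delta> w 0 = return_pmf ((\<lambda>_. 0), [])"
| "col_run m Y K \<delta> w (Suc t) = bind_pmf (col_run m Y K \<delta> w t) (stoc_step m Y K \<delta> w t)"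

text \<open>Distribution of the quantized column q (a list of length N) produced from the
  aligned vector w with Y = Xt (m x N).\<close>
definition quantize_column :: "nat \<Rightarrow> nat \<Rightarrow> (nat \<Rightarrow> nat \<Rightarrow> real) \<Rightarrow> nat \<Rightarrow> real
    \<Rightarrow> (nat \<Rightarrow> real) \<Rightarrow> real list pmf" where
  "quantize_column m N Y K \<delta> w = map_pmf snd (col_run m Y K \<delta> w N)"

text \<open>Distribution of Q^(i) as the list of its columns; the columns j = 0,1,...
  are quantized one after another with fresh independent randomness;
  Wt t j is the aligned matrix.\<close>
fun layer_run :: "nat \<Rightarrow> nat \<Rightarrow> (nat \<Rightarrow> nat \<Rightarrow> real) \<Rightarrow> nat \<Rightarrow> real
    \<Rightarrow> (nat \<Rightarrow> nat \<Rightarrow> real) \<Rightarrow> nat \<Rightarrow> real list list pmf" where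
  "layer_run m N Y K \<delta> Wt 0 = return_pmf []"
| "layer_run m N Y K \<delta> Wt (Suc j) =
     bind_pmf (layer_run m N Y K \<delta> Wt j)
       (\<lambda>Qs. map_pmf (\<lambda>q. Qs @ [q]) (quantize_column m N Y K \<delta> (\<lambda>t. Wt t j)))"

end

theory Submission
  imports Defs "HOL-Probability.Hoeffding"
begin

text \<open>Let \<open>u\<^sub>t\<close> be the running residual of the path-following loop for one column. As long as
  the stochastic quantizer never leaves the range of the alphabet, each step adds to any linear
  functional \<open>\<langle>v, u\<^sub>t\<rangle>\<close> an unbiased two-point increment, and Hoeffding's lemma bounds its moment
  generating function; projecting \<open>v\<close> off the current column makes the bound telescope, so
  \<open>\<langle>v, u\<^sub>T\<rangle>\<close> is sub-Gaussian with variance proxy \<open>\<delta>\<^sup>2 max\<^sub>t \<parallel>Y\<^sub>t\<parallel>\<^sup>2 \<parallel>v\<parallel>\<^sup>2 / 4\<close>.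
  Chernoff bounds for the coordinates of \<open>u\<^sub>N\<close> give the error term, and the same bound for
  \<open>\<langle>Y\<^sub>t, u\<^sub>t\<rangle>\<close> shows that the quantizer input leaves \<open>[-K\<delta>, K\<delta>]\<close> at step \<open>t\<close> only with
  small probability, because the aligned weights lie in \<open>[-K\<delta>/2, K\<delta>/2]\<close>. A union bound over
  the steps and over the columns of the layer finishes the proof.\<close>

lemma two_point_mgf_le:
  fixes r h :: real
  assumes "0 \<le> r" "r \<le> 1"
  shows "r * exp (h * (r - 1)) + (1 - r) * exp (h * r) \<le> exp (h\<^sup>2 / 8)"
proof (cases "h \<ge> 0")
  case True
  define p where "p = 1 - r"
  have p: "p \<ge> 0"
    using assms p_def by simp
  have pos: "1 + p * (exp h - 1) > 0"
    using p True by (intro add_pos_nonneg mult_nonneg_nonneg) auto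
  have "r * exp (h * (r - 1)) + (1 - r) * exp (h * r) = exp (- h * p) * (1 + p * (exp h - 1))"
    by (simp add: p_def algebra_simps flip: exp_add)
  also have "\<dots> = exp (- h * p + ln (1 + p * (exp h - 1)))"
    using pos by (subst exp_add) simp
  also have "\<dots> \<le> exp (h\<^sup>2 / 8)"
    using Hoeffdings_lemma_aux[OF True p] by simp
  finally show ?thesis .
next
  case False
  define g where "g = - h"
  have g: "g \<ge> 0"
    using False g_def by simp
  have pos: "1 + r * (exp g - 1) > 0"
    using assms g by (intro add_pos_nonneg mult_nonneg_nonneg) auto
  have "r * exp (h * (r - 1)) + (1 - r) * exp (h * r) = exp (- g * r) * (1 + r * (exp g - 1))"
    by (simp add: g_def algebra_simps flip: exp_add)
  also have "\<dots> = exp (- g * r + ln (1 + r * (exp g - 1)))"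
    using pos by (subst exp_add) simp
  also have "\<dots> \<le> exp (h\<^sup>2 / 8)"
    using Hoeffdings_lemma_aux[OF g assms(1)] by (simp add: g_def)
  finally show ?thesis .
qed

lemma exp_neg_half_ln2: "exp (- (ln 2 / 2)) = 1 / sqrt (2::real)"
proof -
  have "exp (ln 2 / 2) = (2::real) powr (1/2)"
    unfolding powr_def by simp
  also have "\<dots> = sqrt 2"
    by (rule powr_half_sqrt) simp
  finally show ?thesis
    by (simp add: exp_minus inverse_eq_divide)
qed

text \<open>Capping probabilities at \<open>1\<close> absorbs the regime where the Chernoff bound is useless, so the
  tail estimates below need no smallness assumption (in particular \<open>N = 1\<close> is allowed).\<close>

lemma min_one_two_exp_le:
  fixes a :: real
  assumes "a \<ge> 0"
  shows "min 1 (2 * exp (- (4 * pi * a))) \<le> sqrt 2 * exp (- a)"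
proof (cases "a \<ge> ln 2 / 2")
  case True
  have "(4 * pi - 1) * a \<ge> 1 * a"
    using assms pi_gt3 by (intro mult_right_mono) auto
  then have "exp (- ((4 * pi - 1) * a)) \<le> exp (- (ln 2 / 2))"
    using True by simp
  then have "exp (- ((4 * pi - 1) * a)) \<le> 1 / sqrt 2"
    by (simp add: exp_neg_half_ln2)
  then have "2 * (exp (- ((4 * pi - 1) * a)) * exp (- a)) \<le> 2 * ((1 / sqrt 2) * exp (- a))"
    by (intro mult_left_mono mult_right_mono) auto
  moreover have "exp (- ((4 * pi - 1) * a)) * exp (- a) = exp (- (4 * pi * a))"
    by (simp add: algebra_simps flip: exp_add)
  moreover have "2 * ((1 / sqrt 2) * exp (- a)) = sqrt 2 * exp (- a)"
    by (simp add: field_simps flip: real_sqrt_mult)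
  ultimately show ?thesis
    by linarith
next
  case False
  then have "exp (- (ln 2 / 2)) \<le> exp (- a)"
    by simp
  then have "1 \<le> sqrt 2 * exp (- a)"
    by (simp add: exp_neg_half_ln2 field_simps)
  then show ?thesis
    by linarith
qed

lemma weighted_sum_le_max:
  fixes M S V a :: real
  assumes "M \<ge> 0" "S > 0" "a\<^sup>2 \<le> V * S"
  shows "M * (V - a\<^sup>2 / S) + a\<^sup>2 \<le> max M S * V"
proof (cases "S \<le> M")
  case True
  have "S * (a\<^sup>2 / S) \<le> M * (a\<^sup>2 / S)"
    using True assms by (intro mult_right_mono) auto
  then show ?thesis
    using True assms by (simp add: algebra_simps max_def)
next
  case False
  have "a\<^sup>2 * (1 - M / S) \<le> V * S * (1 - M / S)"
    using False assms by (intro mult_right_mono) (auto simp: field_simps)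
  also have "\<dots> = V * S - V * M"
    using assms by (simp add: field_simps)
  finally show ?thesis
    using False by (simp add: max_def algebra_simps)
qed


definition dot :: "nat \<Rightarrow> (nat \<Rightarrow> real) \<Rightarrow> (nat \<Rightarrow> real) \<Rightarrow> real" where
  "dot m v u = (\<Sum>k<m. v k * u k)"

lemma dot_commute: "dot m v u = dot m u v"
  by (simp add: dot_def mult.commute)

lemma dot_add_scaled_right: "dot m v (\<lambda>k. u k + c * y k) = dot m v u + c * dot m v y"
  by (simp add: dot_def algebra_simps sum.distrib sum_distrib_left)

lemma dot_diff_scaled_left: "dot m (\<lambda>k. v k - c * y k) u = dot m v u - c * dot m y u"
  by (simp add: dot_def algebra_simps sum_subtractf sum_distrib_left)

lemma dot_diff_scaled_right: "dot m u (\<lambda>k. v k - c * y k) = dot m u v - c * dot m u y"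
  by (simp add: dot_def algebra_simps sum_subtractf sum_distrib_left)

lemma dot_uminus_left: "dot m (\<lambda>k. - v k) u = - dot m v u"
  by (simp add: dot_def sum_negf)

lemma dot_zero_right: "dot m v (\<lambda>_. 0) = 0"
  by (simp add: dot_def)

lemma dot_square_le: "(dot m v y)\<^sup>2 \<le> dot m v v * dot m y y"
  using Cauchy_Schwarz_ineq_sum[of v y "{..<m}"] by (simp add: dot_def power2_eq_square)

lemma dot_unit_left:
  assumes "k < m"
  shows "dot m (\<lambda>i. if i = k then 1 else 0) u = u k"
proof -
  have eq: "(\<lambda>i. (if i = k then 1 else 0) * u i) = (\<lambda>i. if i = k then u k else 0)"
    by auto
  show ?thesis
    unfolding dot_def eq using assms by simp
qed

lemma col_sqnorm_eq_dot: "col_sqnorm m Y t = dot m (\<lambda>k. Y k t) (\<lambda>k. Y k t)"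
  by (simp add: col_sqnorm_def dot_def power2_eq_square)

lemma col_sqnorm_pos:
  assumes "k < m" "Y k t \<noteq> 0"
  shows "col_sqnorm m Y t > 0"
proof -
  have "(Y k t)\<^sup>2 \<le> col_sqnorm m Y t"
    unfolding col_sqnorm_def using assms by (intro member_le_sum) auto
  then show ?thesis
    using assms by (smt (verit) zero_less_power2)
qed


lemma sqrt_sum_squares_le:
  fixes u :: "nat \<Rightarrow> real"
  assumes "\<alpha> \<ge> 0" "\<forall>k<m. \<bar>u k\<bar> \<le> \<alpha>"
  shows "sqrt (\<Sum>k<m. (u k)\<^sup>2) \<le> sqrt (real m) * \<alpha>"
proof -
  have "(u k)\<^sup>2 \<le> \<alpha>\<^sup>2" if "k < m" for k
    using power_mono[of "\<bar>u k\<bar>" \<alpha> 2] assms that by simp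
  then have "sqrt (\<Sum>k<m. (u k)\<^sup>2) \<le> sqrt (\<Sum>k<m. \<alpha>\<^sup>2)"
    by (intro real_sqrt_le_mono sum_mono) simp
  also have "\<dots> = sqrt (real m) * \<alpha>"
    using assms by (simp add: real_sqrt_mult)
  finally show ?thesis .
qed

lemma emeasure_pmf_eq_nn_integral_indicator:
  "emeasure (measure_pmf p) A = (\<integral>\<^sup>+x. indicator A x \<partial>p)"
  by simp


locale stochastic_path_following =
  fixes m :: nat and Y :: "nat \<Rightarrow> nat \<Rightarrow> real" and K :: nat and \<delta> :: real
    and w :: "nat \<Rightarrow> real"
  assumes delta_pos: "\<delta> > 0"
begin

definition quant_input :: "(nat \<Rightarrow> real) \<Rightarrow> nat \<Rightarrow> real" where
  "quant_input u t = w t + (\<Sum>k<m. Y k t * u k) / col_sqnorm m Y t"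

definition unsaturated :: "(nat \<Rightarrow> real) \<Rightarrow> nat \<Rightarrow> bool" where
  "unsaturated u t \<longleftrightarrow> \<bar>quant_input u t\<bar> \<le> real K * \<delta>"

definition proj_off :: "nat \<Rightarrow> (nat \<Rightarrow> real) \<Rightarrow> nat \<Rightarrow> real" where
  "proj_off t v = (\<lambda>k. v k - dot m v (\<lambda>k. Y k t) / col_sqnorm m Y t * Y k t)"

definition max_sqnorm :: "nat \<Rightarrow> real" where
  "max_sqnorm T = Max (insert 0 (col_sqnorm m Y ` {..<T}))"

definition sat_exponent :: "nat \<Rightarrow> real" where
  "sat_exponent t = (real K)\<^sup>2 * col_sqnorm m Y t / (8 * pi * Max (col_sqnorm m Y ` {..<t}))"

text \<open>The flag turns false at the first step whose input lies outside \<open>[-K\<delta>, K\<delta>]\<close>, where the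
  quantizer clips instead of rounding without bias.\<close>

definition flagged_step :: "nat \<Rightarrow> (nat \<Rightarrow> real) \<times> real list \<times> bool
    \<Rightarrow> ((nat \<Rightarrow> real) \<times> real list \<times> bool) pmf" where
  "flagged_step t = (\<lambda>(u, qs, b).
     map_pmf (\<lambda>(u', qs'). (u', qs', b \<and> unsaturated u t)) (stoc_step m Y K \<delta> w t (u, qs)))"

fun flagged_run :: "nat \<Rightarrow> ((nat \<Rightarrow> real) \<times> real list \<times> bool) pmf" where
  "flagged_run 0 = return_pmf ((\<lambda>_. 0), [], True)"
| "flagged_run (Suc t) = bind_pmf (flagged_run t) (flagged_step t)"

lemma nn_integral_flagged_step:
  "(\<integral>\<^sup>+y. f y \<partial>flagged_step t (u, qs, b))
     = (\<integral>\<^sup>+q. f (\<lambda>k. u k + (w t - q) * Y k t, qs @ [q], b \<and> unsaturated u t)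
           \<partial>stocq K \<delta> (quant_input u t))"
  by (simp add: flagged_step_def stoc_step_def quant_input_def)

lemma map_flagged_run: "map_pmf (\<lambda>(u, qs, b). (u, qs)) (flagged_run t) = col_run m Y K \<delta> w t"
proof (induction t)
  case (Suc t)
  have "map_pmf (\<lambda>(u, qs, b). (u, qs)) (flagged_run (Suc t))
      = bind_pmf (flagged_run t) (\<lambda>x. stoc_step m Y K \<delta> w t ((\<lambda>(u, qs, b). (u, qs)) x))"
    unfolding flagged_run.simps map_bind_pmf flagged_step_def
    by (intro bind_pmf_cong refl) (auto simp: map_pmf_comp case_prod_beta cong: map_pmf_cong)
  also have "\<dots> = bind_pmf (map_pmf (\<lambda>(u, qs, b). (u, qs)) (flagged_run t)) (stoc_step m Y K \<delta> w t)"
    by (simp add: bind_map_pmf)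
  finally show ?case
    using Suc by simp
qed simp

lemma quantize_column_eq: "quantize_column m N Y K \<delta> w = map_pmf (\<lambda>(u, qs, b). qs) (flagged_run N)"
  unfolding quantize_column_def map_flagged_run[symmetric] map_pmf_comp
  by (intro map_pmf_cong) auto

lemma flagged_run_residual:
  assumes "(u, qs, b) \<in> set_pmf (flagged_run t)"
  shows "length qs = t \<and> (\<forall>k. u k = (\<Sum>s<t. Y k s * (w s - qs ! s)))"
  using assms
proof (induction t arbitrary: u qs b)
  case (Suc t)
  then obtain u' qs' b' where prev: "(u', qs', b') \<in> set_pmf (flagged_run t)"
    and "(u, qs, b) \<in> set_pmf (flagged_step t (u', qs', b'))"
    by auto
  then obtain q where eq: "u = (\<lambda>k. u' k + (w t - q) * Y k t)" "qs = qs' @ [q]"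
    by (auto simp: flagged_step_def stoc_step_def)
  have "(\<Sum>s<t. Y k s * (w s - (qs' @ [q]) ! s)) = (\<Sum>s<t. Y k s * (w s - qs' ! s))" for k
    using Suc.IH[OF prev] by (intro sum.cong) (auto simp: nth_append)
  then show ?case
    using Suc.IH[OF prev] by (simp add: eq nth_append mult.commute)
qed simp

lemma dot_step:
  assumes "col_sqnorm m Y t > 0"
  shows "dot m v (\<lambda>k. u k + (w t - q) * Y k t)
       = dot m (proj_off t v) u + (quant_input u t - q) * dot m v (\<lambda>k. Y k t)"
proof -
  have "(\<Sum>k<m. Y k t * u k) = dot m (\<lambda>k. Y k t) u"
    by (simp add: dot_def)
  then show ?thesis
    unfolding proj_off_def dot_add_scaled_right dot_diff_scaled_left quant_input_def
    using assms by (simp add: field_simps dot_commute)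
qed

lemma dot_proj_off_self:
  assumes "col_sqnorm m Y t > 0"
  shows "dot m (proj_off t v) (proj_off t v)
       = dot m v v - (dot m v (\<lambda>k. Y k t))\<^sup>2 / col_sqnorm m Y t"
proof -
  define a where "a = dot m v (\<lambda>k. Y k t)"
  define S where "S = col_sqnorm m Y t"
  have P: "proj_off t v = (\<lambda>k. v k - a / S * Y k t)"
    unfolding proj_off_def a_def S_def ..
  have "dot m (proj_off t v) v = dot m v v - a / S * a"
    unfolding P dot_diff_scaled_left a_def by (simp add: dot_commute)
  moreover have "dot m (proj_off t v) (\<lambda>k. Y k t) = 0"
    using assms unfolding P dot_diff_scaled_left a_def S_def col_sqnorm_eq_dot by simp
  moreover have "dot m (proj_off t v) (proj_off t v)
      = dot m (proj_off t v) v - a / S * dot m (proj_off t v) (\<lambda>k. Y k t)"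
    by (subst (2) P) (rule dot_diff_scaled_right)
  ultimately show ?thesis
    by (simp add: a_def S_def power2_eq_square)
qed

text \<open>The rounding error \<open>quant_input u t - q\<close> of an unsaturated step has mean zero and range
  \<open>\<delta>\<close>, so Hoeffding's lemma applies.\<close>

lemma unsaturated_step_mgf_le:
  assumes sq: "col_sqnorm m Y t > 0" and unsat: "unsaturated u t"
  shows "(\<integral>\<^sup>+q. ennreal (exp (s * dot m v (\<lambda>k. u k + (w t - q) * Y k t))) \<partial>stocq K \<delta> (quant_input u t))
     \<le> ennreal (exp (s * dot m (proj_off t v) u) * exp ((s * dot m v (\<lambda>k. Y k t) * \<delta>)\<^sup>2 / 8))"
proof -
  define z where "z = quant_input u t"
  define f where "f = real_of_int \<lfloor>z / \<delta>\<rfloor>"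
  define r where "r = z / \<delta> - f"
  define a where "a = dot m v (\<lambda>k. Y k t)"
  define P where "P = dot m (proj_off t v) u"
  have r: "0 \<le> r" "r \<le> 1"
    unfolding r_def f_def by linarith+
  have stocq: "stocq K \<delta> z = map_pmf (\<lambda>b. if b then (f + 1) * \<delta> else f * \<delta>) (bernoulli_pmf r)"
    using unsat unfolding stocq_def unsaturated_def z_def f_def r_def by simp
  have split: "dot m v (\<lambda>k. u k + (w t - q) * Y k t) = P + (z - q) * a" for q
    unfolding P_def a_def z_def by (rule dot_step[OF sq])
  have "z - (f + 1) * \<delta> = (r - 1) * \<delta>" "z - f * \<delta> = r * \<delta>"
    unfolding r_def using delta_pos by (simp_all add: field_simps)
  then have "(\<integral>\<^sup>+q. ennreal (exp (s * dot m v (\<lambda>k. u k + (w t - q) * Y k t))) \<partial>stocq K \<delta> z)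
      = ennreal (exp (s * (P + (r - 1) * \<delta> * a)) * r + exp (s * (P + r * \<delta> * a)) * (1 - r))"
    unfolding stocq split using r by (simp add: mult.assoc ennreal_mult ennreal_plus)
  also have "\<dots> = ennreal (exp (s * P) * (r * exp (s * a * \<delta> * (r - 1)) + (1 - r) * exp (s * a * \<delta> * r)))"
    by (simp add: algebra_simps flip: exp_add)
  also have "\<dots> \<le> ennreal (exp (s * P) * exp ((s * a * \<delta>)\<^sup>2 / 8))"
    using two_point_mgf_le[OF r, of "s * a * \<delta>"] by (intro ennreal_leI mult_left_mono) auto
  finally show ?thesis
    unfolding z_def P_def a_def .
qed

lemma max_sqnorm_Suc: "max_sqnorm (Suc T) = max (max_sqnorm T) (col_sqnorm m Y T)"
  unfolding max_sqnorm_def lessThan_Suc image_insert insert_commute[of 0 "col_sqnorm m Y T"]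
  by (subst Max_insert) (auto simp: max.commute)

lemma max_sqnorm_nonneg: "max_sqnorm T \<ge> 0"
  unfolding max_sqnorm_def by (intro Max_ge_iff[THEN iffD2]) auto

lemma max_sqnorm_eq_Max:
  assumes "T > 0"
  shows "max_sqnorm T = Max (col_sqnorm m Y ` {..<T})"
proof -
  have "0 \<le> col_sqnorm m Y 0"
    by (simp add: col_sqnorm_def sum_nonneg)
  also have "\<dots> \<le> Max (col_sqnorm m Y ` {..<T})"
    using assms by (intro Max_ge) auto
  finally show ?thesis
    unfolding max_sqnorm_def using assms by (subst Max_insert) auto
qed

lemma max_sqnorm_pos:
  assumes "T > 0" "col_sqnorm m Y 0 > 0"
  shows "max_sqnorm T > 0"
  unfolding max_sqnorm_def using assms by (intro Max_gr_iff[THEN iffD2]) auto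

definition flagged_exp :: "real \<Rightarrow> (nat \<Rightarrow> real) \<Rightarrow> (nat \<Rightarrow> real) \<times> real list \<times> bool \<Rightarrow> ennreal" where
  "flagged_exp s v = (\<lambda>(u, qs, b). if b then ennreal (exp (s * dot m v u)) else 0)"

text \<open>The variance proxy telescopes because
  \<open>\<parallel>proj_off t v\<parallel>\<^sup>2 + \<langle>v, Y\<^sub>t\<rangle>\<^sup>2 / \<parallel>Y\<^sub>t\<parallel>\<^sup>2 = \<parallel>v\<parallel>\<^sup>2\<close>.\<close>

lemma flagged_mgf_le:
  assumes "\<forall>t<T. col_sqnorm m Y t > 0"
  shows "(\<integral>\<^sup>+x. flagged_exp s v x \<partial>flagged_run T)
           \<le> ennreal (exp (s\<^sup>2 * \<delta>\<^sup>2 / 8 * max_sqnorm T * dot m v v))"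
  using assms
proof (induction T arbitrary: v)
  case (Suc T)
  define a where "a = dot m v (\<lambda>k. Y k T)"
  define c where "c = s\<^sup>2 * \<delta>\<^sup>2 / 8"
  have sq: "col_sqnorm m Y T > 0"
    using Suc.prems by simp
  have step: "(\<integral>\<^sup>+y. flagged_exp s v y \<partial>flagged_step T x)
      \<le> flagged_exp s (proj_off T v) x
          * ennreal (exp ((s * a * \<delta>)\<^sup>2 / 8))" for x
  proof -
    obtain u qs b where x: "x = (u, qs, b)"
      by (cases x) auto
    show ?thesis
      using unsaturated_step_mgf_le[OF sq, of u s v]
      by (cases "b \<and> unsaturated u T")
        (auto simp: x nn_integral_flagged_step flagged_exp_def a_def ennreal_mult)
  qed
  have "(\<integral>\<^sup>+x. flagged_exp s v x \<partial>flagged_run (Suc T))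
      \<le> (\<integral>\<^sup>+x. flagged_exp s (proj_off T v) x
             * ennreal (exp ((s * a * \<delta>)\<^sup>2 / 8)) \<partial>flagged_run T)"
    unfolding flagged_run.simps nn_integral_bind_pmf by (intro nn_integral_mono step)
  also have "\<dots> = (\<integral>\<^sup>+x. flagged_exp s (proj_off T v) x \<partial>flagged_run T)
          * ennreal (exp ((s * a * \<delta>)\<^sup>2 / 8))"
    by (rule nn_integral_multc) simp
  also have "\<dots> \<le> ennreal (exp (c * max_sqnorm T * dot m (proj_off T v) (proj_off T v)))
      * ennreal (exp ((s * a * \<delta>)\<^sup>2 / 8))"
    using Suc sq unfolding c_def by (intro mult_right_mono) auto
  also have "\<dots> = ennreal (exp (c * (max_sqnorm T * dot m (proj_off T v) (proj_off T v) + a\<^sup>2)))"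
    by (simp add: c_def power_mult_distrib algebra_simps flip: ennreal_mult exp_add)
  also have "\<dots> \<le> ennreal (exp (c * (max_sqnorm (Suc T) * dot m v v)))"
  proof -
    have "a\<^sup>2 \<le> dot m v v * col_sqnorm m Y T"
      unfolding a_def col_sqnorm_eq_dot by (rule dot_square_le)
    then have "max_sqnorm T * dot m (proj_off T v) (proj_off T v) + a\<^sup>2 \<le> max_sqnorm (Suc T) * dot m v v"
      unfolding dot_proj_off_self[OF sq] max_sqnorm_Suc a_def[symmetric]
      using weighted_sum_le_max[OF max_sqnorm_nonneg sq] by blast
    then show ?thesis
      unfolding c_def by (intro ennreal_leI) (simp add: mult_left_mono)
  qed
  finally show ?case
    unfolding c_def by (simp add: mult.assoc)
qed (simp add: flagged_exp_def max_sqnorm_def dot_zero_right)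

lemma flagged_tail_le:
  assumes "\<forall>t<T. col_sqnorm m Y t > 0" "s \<ge> 0"
  shows "emeasure (flagged_run T) {(u, qs, b). b \<and> \<beta> < dot m v u}
           \<le> ennreal (exp (s\<^sup>2 * \<delta>\<^sup>2 / 8 * max_sqnorm T * dot m v v - s * \<beta>))"
proof -
  have "emeasure (flagged_run T) {(u, qs, b). b \<and> \<beta> < dot m v u}
      \<le> (\<integral>\<^sup>+x. ennreal (exp (- s * \<beta>)) * flagged_exp s v x \<partial>flagged_run T)"
    unfolding emeasure_pmf_eq_nn_integral_indicator
  proof (intro nn_integral_mono)
    fix x :: "(nat \<Rightarrow> real) \<times> real list \<times> bool"
    obtain u qs b where x: "x = (u, qs, b)"
      by (cases x) auto
    have "b \<Longrightarrow> \<beta> < dot m v u \<Longrightarrow> 1 \<le> exp (- s * \<beta>) * exp (s * dot m v u)"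
      using assms(2) by (simp add: mult_left_mono flip: exp_add)
    then show "indicator {(u, qs, b). b \<and> \<beta> < dot m v u} x
        \<le> ennreal (exp (- s * \<beta>)) * flagged_exp s v x"
      by (auto simp: x flagged_exp_def indicator_def simp flip: ennreal_mult)
  qed
  also have "\<dots> = ennreal (exp (- s * \<beta>))
      * (\<integral>\<^sup>+x. flagged_exp s v x \<partial>flagged_run T)"
    by (rule nn_integral_cmult) simp
  also have "\<dots> \<le> ennreal (exp (- s * \<beta>)) * ennreal (exp (s\<^sup>2 * \<delta>\<^sup>2 / 8 * max_sqnorm T * dot m v v))"
    using flagged_mgf_le[OF assms(1)] by (intro mult_left_mono) auto
  finally show ?thesis
    by (simp flip: ennreal_mult exp_add)
qed

lemma flagged_abs_tail_le:
  assumes pos: "\<forall>t<T. col_sqnorm m Y t > 0" and "\<beta> \<ge> 0"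
    and M: "max_sqnorm T > 0" and V: "dot m v v > 0"
  shows "emeasure (flagged_run T) {(u, qs, b). b \<and> \<beta> < \<bar>dot m v u\<bar>}
           \<le> ennreal (min 1 (2 * exp (- (2 * \<beta>\<^sup>2 / (\<delta>\<^sup>2 * max_sqnorm T * dot m v v)))))"
proof -
  define D where "D = \<delta>\<^sup>2 * max_sqnorm T * dot m v v"
  have D: "D > 0"
    unfolding D_def using delta_pos M V by simp
  define s where "s = 4 * \<beta> / D"
  have s: "s \<ge> 0"
    unfolding s_def using D assms(2) by simp
  \<comment> \<open>\<open>s\<close> minimises the Chernoff exponent\<close>
  have exponent: "s\<^sup>2 * \<delta>\<^sup>2 / 8 * max_sqnorm T * dot m v v - s * \<beta> = - (2 * \<beta>\<^sup>2 / D)"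
    unfolding s_def D_def using D[unfolded D_def] by (simp add: field_simps power2_eq_square)
  have split: "{(u, qs, b). b \<and> \<beta> < \<bar>dot m v u\<bar>}
      = {(u, qs, b). b \<and> \<beta> < dot m v u} \<union> {(u, qs, b). b \<and> \<beta> < dot m (\<lambda>k. - v k) u}"
    by (auto simp: dot_uminus_left)
  have vv: "dot m (\<lambda>k. - v k) (\<lambda>k. - v k) = dot m v v"
    by (simp add: dot_def)
  have "emeasure (flagged_run T) {(u, qs, b). b \<and> \<beta> < \<bar>dot m v u\<bar>}
      \<le> ennreal (exp (- (2 * \<beta>\<^sup>2 / D))) + ennreal (exp (- (2 * \<beta>\<^sup>2 / D)))"
    using flagged_tail_le[OF pos s, of \<beta> v] flagged_tail_le[OF pos s, of \<beta> "\<lambda>k. - v k"]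
    unfolding split vv exponent
    by (intro order_trans[OF emeasure_subadditive] add_mono) simp_all
  then have "emeasure (flagged_run T) {(u, qs, b). b \<and> \<beta> < \<bar>dot m v u\<bar>}
      \<le> ennreal (2 * exp (- (2 * \<beta>\<^sup>2 / D)))"
    by (simp flip: ennreal_plus)
  moreover have "emeasure (flagged_run T) {(u, qs, b). b \<and> \<beta> < \<bar>dot m v u\<bar>} \<le> ennreal 1"
    by (simp add: measure_pmf.emeasure_le_1)
  ultimately show ?thesis
    unfolding D_def by (simp add: min_def)
qed

lemma saturation_union_bound:
  "emeasure (flagged_run T) {(u, qs, b). \<not> b}
     \<le> (\<Sum>t<T. emeasure (flagged_run t) {(u, qs, b). b \<and> \<not> unsaturated u t})"
proof (induction T)
  case (Suc T)
  have step: "(\<integral>\<^sup>+y. indicator {(u, qs, b). \<not> b} y \<partial>flagged_step T x)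
      \<le> indicator {(u, qs, b). \<not> b} x + indicator {(u, qs, b). b \<and> \<not> unsaturated u T} x" for x
    by (cases x) (simp add: nn_integral_flagged_step indicator_def)
  have "emeasure (flagged_run (Suc T)) {(u, qs, b). \<not> b}
      \<le> (\<integral>\<^sup>+x. indicator {(u, qs, b). \<not> b} x + indicator {(u, qs, b). b \<and> \<not> unsaturated u T} x \<partial>flagged_run T)"
    unfolding emeasure_pmf_eq_nn_integral_indicator flagged_run.simps
      nn_integral_bind_pmf
    by (intro nn_integral_mono step)
  also have "\<dots> = emeasure (flagged_run T) {(u, qs, b). \<not> b}
      + emeasure (flagged_run T) {(u, qs, b). b \<and> \<not> unsaturated u T}"
    by (subst nn_integral_add) auto
  finally show ?case
    using Suc.IH by (simp add: add_right_mono order_trans)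
qed simp

lemma saturation_at_le:
  assumes t: "t \<ge> 1" and pos: "\<forall>s\<le>t. col_sqnorm m Y s > 0"
    and w: "\<bar>w t\<bar> \<le> real K * \<delta> / 2"
  shows "emeasure (flagged_run t) {(u, qs, b). b \<and> \<not> unsaturated u t}
     \<le> ennreal (sqrt 2 * exp (- sat_exponent t))"
proof -
  define S where "S = col_sqnorm m Y t"
  have S: "S > 0"
    using pos S_def by simp
  define \<beta> where "\<beta> = real K * \<delta> * S / 2"
  have M: "max_sqnorm t > 0" "max_sqnorm t = Max (col_sqnorm m Y ` {..<t})"
    using t pos by (auto intro: max_sqnorm_pos max_sqnorm_eq_Max)
  \<comment> \<open>saturation needs the correction term \<open>\<langle>Y\<^sub>t, u\<rangle> / \<parallel>Y\<^sub>t\<parallel>\<^sup>2\<close> to exceed \<open>K\<delta>/2\<close>\<close>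
  have "{(u, qs, b). b \<and> \<not> unsaturated u t} \<subseteq> {(u, qs, b). b \<and> \<beta> < \<bar>dot m (\<lambda>k. Y k t) u\<bar>}"
  proof safe
    fix u qs
    assume "\<not> unsaturated u t"
    then have "real K * \<delta> / 2 < \<bar>dot m (\<lambda>k. Y k t) u / S\<bar>"
      using w unfolding unsaturated_def quant_input_def dot_def S_def by linarith
    then show "\<beta> < \<bar>dot m (\<lambda>k. Y k t) u\<bar>"
      using S unfolding \<beta>_def by (simp add: field_simps)
  qed
  then have "emeasure (flagged_run t) {(u, qs, b). b \<and> \<not> unsaturated u t}
      \<le> emeasure (flagged_run t) {(u, qs, b). b \<and> \<beta> < \<bar>dot m (\<lambda>k. Y k t) u\<bar>}"
    by (intro emeasure_mono) auto
  also have "\<dots> \<le> ennreal (min 1 (2 * exp (- (2 * \<beta>\<^sup>2 / (\<delta>\<^sup>2 * max_sqnorm t * S)))))"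
    using flagged_abs_tail_le[OF _ _ M(1), where v = "\<lambda>k. Y k t" and \<beta> = \<beta>] pos S delta_pos
    unfolding \<beta>_def S_def col_sqnorm_eq_dot by auto
  also have "2 * \<beta>\<^sup>2 / (\<delta>\<^sup>2 * max_sqnorm t * S) = 4 * pi * sat_exponent t"
    unfolding \<beta>_def sat_exponent_def M(2)[symmetric] S_def[symmetric]
    using delta_pos S M(1) by (simp add: field_simps power2_eq_square)
  also have "min 1 (2 * exp (- (4 * pi * sat_exponent t))) \<le> sqrt 2 * exp (- sat_exponent t)"
    using M S unfolding sat_exponent_def S_def[symmetric] by (intro min_one_two_exp_le) simp
  finally show ?thesis
    by (simp add: ennreal_leI)
qed

lemma saturation_prob_le:
  assumes N: "N \<ge> 1" and pos: "\<forall>t<N. col_sqnorm m Y t > 0"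
    and w: "\<forall>t<N. \<bar>w t\<bar> \<le> real K * \<delta> / 2"
  shows "emeasure (flagged_run N) {(u, qs, b). \<not> b}
     \<le> ennreal (sqrt 2 * (\<Sum>t\<in>{1..<N}. exp (- sat_exponent t)))"
proof -
  have "unsaturated (\<lambda>_. 0) 0"
    using w N delta_pos unfolding unsaturated_def quant_input_def by auto
  then have "emeasure (flagged_run N) {(u, qs, b). \<not> b}
      \<le> (\<Sum>t\<in>{1..<N}. emeasure (flagged_run t) {(u, qs, b). b \<and> \<not> unsaturated u t})"
    using saturation_union_bound[of N] N
    by (simp add: lessThan_atLeast0 sum.atLeast_Suc_lessThan)
  also have "\<dots> \<le> (\<Sum>t\<in>{1..<N}. ennreal (sqrt 2 * exp (- sat_exponent t)))"
    using pos w by (intro sum_mono saturation_at_le) auto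
  finally show ?thesis
    by (simp add: sum_distrib_left)
qed

lemma coordinate_tail_le:
  assumes pos: "\<forall>t<N. col_sqnorm m Y t > 0" and N: "N \<ge> 1" and "\<alpha> \<ge> 0"
  shows "emeasure (flagged_run N) {(u, qs, b). b \<and> (\<exists>k<m. \<alpha> < \<bar>u k\<bar>)}
     \<le> ennreal (real m * min 1 (2 * exp (- (2 * \<alpha>\<^sup>2 / (\<delta>\<^sup>2 * max_sqnorm N)))))"
proof -
  have M: "max_sqnorm N > 0"
    using N pos by (intro max_sqnorm_pos) auto
  have eq: "{(u, qs, b). b \<and> (\<exists>k<m. \<alpha> < \<bar>u k\<bar>)}
      = (\<Union>k<m. {(u, qs, b). b \<and> \<alpha> < \<bar>dot m (\<lambda>i. if i = k then 1 else 0) u\<bar>})"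
    by (auto simp: dot_unit_left)
  have "emeasure (flagged_run N) {(u, qs, b). b \<and> (\<exists>k<m. \<alpha> < \<bar>u k\<bar>)}
      \<le> (\<Sum>k<m. emeasure (flagged_run N) {(u, qs, b). b \<and> \<alpha> < \<bar>dot m (\<lambda>i. if i = k then 1 else 0) u\<bar>})"
    unfolding eq by (rule emeasure_subadditive_finite) auto
  also have "\<dots> \<le> (\<Sum>k<m. ennreal (min 1 (2 * exp (- (2 * \<alpha>\<^sup>2 / (\<delta>\<^sup>2 * max_sqnorm N))))))"
  proof (rule sum_mono)
    fix k
    assume "k \<in> {..<m}"
    then show "emeasure (flagged_run N) {(u, qs, b). b \<and> \<alpha> < \<bar>dot m (\<lambda>i. if i = k then 1 else 0) u\<bar>}
        \<le> ennreal (min 1 (2 * exp (- (2 * \<alpha>\<^sup>2 / (\<delta>\<^sup>2 * max_sqnorm N)))))"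
      using flagged_abs_tail_le[OF pos assms(3) M, where v = "\<lambda>i. if i = k then 1 else 0"]
      by (simp add: dot_unit_left)
  qed
  finally show ?thesis
    by (simp add: ennreal_of_nat_eq_real_of_nat flip: ennreal_mult)
qed

lemma Max_col_norm_eq:
  assumes "N \<ge> 1"
  shows "Max (col_norm m Y ` {..<N}) = sqrt (max_sqnorm N)"
proof -
  have "sqrt (Max (col_sqnorm m Y ` {..<N})) = Max (sqrt ` col_sqnorm m Y ` {..<N})"
    using assms by (intro mono_Max_commute) (auto simp: mono_def lessThan_empty_iff)
  then show ?thesis
    using assms by (simp add: max_sqnorm_eq_Max col_norm_def image_image)
qed

lemma column_residual_tail_le:
  assumes "\<alpha> \<ge> 0"
  shows "emeasure (quantize_column m N Y K \<delta> w)
      {q. sqrt (real m) * \<alpha> < sqrt (\<Sum>k<m. (\<Sum>t<N. Y k t * (w t - q ! t))\<^sup>2)}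
    \<le> emeasure (flagged_run N) {(u, qs, b). \<not> b}
      + emeasure (flagged_run N) {(u, qs, b). b \<and> (\<exists>k<m. \<alpha> < \<bar>u k\<bar>)}"
proof -
  define B where "B = {q. sqrt (real m) * \<alpha> < sqrt (\<Sum>k<m. (\<Sum>t<N. Y k t * (w t - q ! t))\<^sup>2)}"
  have "(\<lambda>(u, qs, b). qs) -` B \<inter> set_pmf (flagged_run N)
      \<subseteq> {(u, qs, b). \<not> b} \<union> {(u, qs, b). b \<and> (\<exists>k<m. \<alpha> < \<bar>u k\<bar>)}"
  proof
    fix x
    assume x: "x \<in> (\<lambda>(u, qs, b). qs) -` B \<inter> set_pmf (flagged_run N)"
    obtain u qs b where [simp]: "x = (u, qs, b)"
      by (cases x)
    have "sqrt (real m) * \<alpha> < sqrt (\<Sum>k<m. (u k)\<^sup>2)"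
      using x flagged_run_residual[of u qs b N] unfolding B_def by simp
    then have "\<exists>k<m. \<alpha> < \<bar>u k\<bar>"
      using sqrt_sum_squares_le[OF assms, of m u] by force
    then show "x \<in> {(u, qs, b). \<not> b} \<union> {(u, qs, b). b \<and> (\<exists>k<m. \<alpha> < \<bar>u k\<bar>)}"
      by simp
  qed
  moreover have "emeasure (quantize_column m N Y K \<delta> w) B
      = emeasure (flagged_run N) ((\<lambda>(u, qs, b). qs) -` B \<inter> set_pmf (flagged_run N))"
    unfolding quantize_column_eq emeasure_map_pmf emeasure_Int_set_pmf ..
  ultimately have "emeasure (quantize_column m N Y K \<delta> w) B
      \<le> emeasure (flagged_run N) ({(u, qs, b). \<not> b} \<union> {(u, qs, b). b \<and> (\<exists>k<m. \<alpha> < \<bar>u k\<bar>)})"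
    by (simp add: emeasure_mono)
  also have "\<dots> \<le> emeasure (flagged_run N) {(u, qs, b). \<not> b}
      + emeasure (flagged_run N) {(u, qs, b). b \<and> (\<exists>k<m. \<alpha> < \<bar>u k\<bar>)}"
    by (rule emeasure_subadditive) simp_all
  finally show ?thesis
    unfolding B_def .
qed

lemma column_error_tail:
  assumes N: "N \<ge> 1" and pos: "\<forall>t<N. col_sqnorm m Y t > 0"
    and w: "\<forall>t<N. \<bar>w t\<bar> \<le> real K * \<delta> / 2"
  shows "measure_pmf.prob (quantize_column m N Y K \<delta> w)
     {q. \<delta> * sqrt (2 * pi * real p * real m * ln (real N)) * Max (col_norm m Y ` {..<N})
         < sqrt (\<Sum>k<m. (\<Sum>t<N. Y k t * (w t - q ! t))\<^sup>2)}
   \<le> sqrt 2 * real m / real N ^ p + sqrt 2 * (\<Sum>t\<in>{1..<N}. exp (- sat_exponent t))"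
proof -
  define L where "L = real p * ln (real N)"
  have L: "L \<ge> 0"
    unfolding L_def using N by simp
  have M: "max_sqnorm N > 0"
    using N pos by (intro max_sqnorm_pos) auto
  define \<alpha> where "\<alpha> = \<delta> * sqrt (max_sqnorm N) * sqrt (2 * pi * L)"
  have \<alpha>: "\<alpha> \<ge> 0"
    unfolding \<alpha>_def using delta_pos M L by simp
  define B where "B = {q. \<delta> * sqrt (2 * pi * real p * real m * ln (real N)) * Max (col_norm m Y ` {..<N})
         < sqrt (\<Sum>k<m. (\<Sum>t<N. Y k t * (w t - q ! t))\<^sup>2)}"
  have "\<delta> * sqrt (2 * pi * real p * real m * ln (real N)) * Max (col_norm m Y ` {..<N})
      = sqrt (real m) * \<alpha>"
    unfolding \<alpha>_def L_def Max_col_norm_eq[OF N] by (simp add: real_sqrt_mult[symmetric] algebra_simps)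
  then have "emeasure (quantize_column m N Y K \<delta> w) B
    \<le> emeasure (flagged_run N) {(u, qs, b). \<not> b}
      + emeasure (flagged_run N) {(u, qs, b). b \<and> (\<exists>k<m. \<alpha> < \<bar>u k\<bar>)}"
    using column_residual_tail_le[OF \<alpha>] unfolding B_def by simp
  also have "\<dots> \<le> ennreal (sqrt 2 * (\<Sum>t\<in>{1..<N}. exp (- sat_exponent t)))
      + ennreal (real m * min 1 (2 * exp (- (4 * pi * L))))"
  proof -
    have "2 * \<alpha>\<^sup>2 / (\<delta>\<^sup>2 * max_sqnorm N) = 4 * pi * L"
      unfolding \<alpha>_def using delta_pos M L by (simp add: power_mult_distrib)
    then show ?thesis
      using saturation_prob_le[OF N pos w] coordinate_tail_le[OF pos N \<alpha>] by (intro add_mono) simp_all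
  qed
  also have "real m * min 1 (2 * exp (- (4 * pi * L))) \<le> real m * (sqrt 2 * exp (- L))"
    using L by (intro mult_left_mono min_one_two_exp_le) auto
  also have "real m * (sqrt 2 * exp (- L)) = sqrt 2 * real m / real N ^ p"
  proof -
    have "exp (- L) = 1 / real N ^ p"
      unfolding L_def using N by (simp add: exp_minus ln_realpow[symmetric] inverse_eq_divide)
    then show ?thesis
      by simp
  qed
  finally have "emeasure (quantize_column m N Y K \<delta> w) B
      \<le> ennreal (sqrt 2 * real m / real N ^ p + sqrt 2 * (\<Sum>t\<in>{1..<N}. exp (- sat_exponent t)))"
    by (simp add: ennreal_leI add.commute sum_nonneg flip: ennreal_plus)
  then show ?thesis
    unfolding B_def measure_pmf.emeasure_eq_measure
    by (subst (asm) ennreal_le_iff) (auto simp: sum_nonneg)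
qed
end


lemma layer_run_length: "Q \<in> set_pmf (layer_run m N Y K \<delta> Wt n) \<Longrightarrow> length Q = n"
  by (induction n arbitrary: Q) auto

lemma layer_run_union_bound:
  "emeasure (layer_run m N Y K \<delta> Wt n) {Q. \<exists>j<n. bad j (Q ! j)}
    \<le> (\<Sum>j<n. emeasure (quantize_column m N Y K \<delta> (\<lambda>t. Wt t j)) {q. bad j q})"
proof (induction n)
  case (Suc n)
  define col where "col = quantize_column m N Y K \<delta> (\<lambda>t. Wt t n)"
  define A where "A = {Q. \<exists>j<n. bad j (Q ! j)}"
  have step: "(\<integral>\<^sup>+q. indicator {Q. \<exists>j<Suc n. bad j (Q ! j)} (Qs @ [q]) \<partial>col)
      \<le> indicator A Qs + emeasure col {q. bad n q}"
    if "Qs \<in> set_pmf (layer_run m N Y K \<delta> Wt n)" for Qs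
  proof -
    have len: "length Qs = n"
      using layer_run_length[OF that] .
    have "indicator {Q. \<exists>j<Suc n. bad j (Q ! j)} (Qs @ [q])
        \<le> (indicator A Qs + indicator {q. bad n q} q :: ennreal)" for q
      using len by (auto simp: indicator_def A_def nth_append less_Suc_eq)
    then have "(\<integral>\<^sup>+q. indicator {Q. \<exists>j<Suc n. bad j (Q ! j)} (Qs @ [q]) \<partial>col)
        \<le> (\<integral>\<^sup>+q. indicator A Qs + indicator {q. bad n q} q \<partial>col)"
      by (intro nn_integral_mono)
    then show ?thesis
      by (simp add: nn_integral_add measure_pmf.emeasure_space_1)
  qed
  have "emeasure (layer_run m N Y K \<delta> Wt (Suc n)) {Q. \<exists>j<Suc n. bad j (Q ! j)}
      = (\<integral>\<^sup>+Qs. (\<integral>\<^sup>+q. indicator {Q. \<exists>j<Suc n. bad j (Q ! j)} (Qs @ [q]) \<partial>col) \<partial>layer_run m N Y K \<delta> Wt n)"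
    unfolding emeasure_pmf_eq_nn_integral_indicator col_def layer_run.simps
      nn_integral_bind_pmf nn_integral_map_pmf ..
  also have "\<dots> \<le> (\<integral>\<^sup>+Qs. indicator A Qs + emeasure col {q. bad n q} \<partial>layer_run m N Y K \<delta> Wt n)"
    by (intro nn_integral_mono_AE) (auto simp: AE_measure_pmf_iff step)
  also have "\<dots> = emeasure (layer_run m N Y K \<delta> Wt n) A + emeasure col {q. bad n q}"
    by (simp add: nn_integral_add measure_pmf.emeasure_space_1)
  finally show ?case
    using Suc.IH unfolding A_def col_def by (simp add: add_right_mono order_trans)
qed simp

lemma layer_run_all_good:
  assumes "\<And>j. j < n \<Longrightarrow> measure_pmf.prob (quantize_column m N Y K \<delta> (\<lambda>t. Wt t j)) {q. bad j q} \<le> c"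
  shows "measure_pmf.prob (layer_run m N Y K \<delta> Wt n) {Q. \<forall>j<n. \<not> bad j (Q ! j)} \<ge> 1 - real n * c"
proof -
  have "ennreal (measure_pmf.prob (layer_run m N Y K \<delta> Wt n) {Q. \<exists>j<n. bad j (Q ! j)})
      \<le> ennreal (\<Sum>j<n. measure_pmf.prob (quantize_column m N Y K \<delta> (\<lambda>t. Wt t j)) {q. bad j q})"
    using layer_run_union_bound[of m N Y K \<delta> Wt n bad]
    by (simp add: measure_pmf.emeasure_eq_measure sum_ennreal)
  then have "measure_pmf.prob (layer_run m N Y K \<delta> Wt n) {Q. \<exists>j<n. bad j (Q ! j)}
      \<le> (\<Sum>j<n. measure_pmf.prob (quantize_column m N Y K \<delta> (\<lambda>t. Wt t j)) {q. bad j q})"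
    by (simp add: ennreal_le_iff sum_nonneg)
  also have "\<dots> \<le> real n * c"
    using sum_mono[of "{..<n}", OF assms] by simp
  finally have "measure_pmf.prob (layer_run m N Y K \<delta> Wt n) (UNIV - {Q. \<forall>j<n. \<not> bad j (Q ! j)})
      \<le> real n * c"
    by (simp add: set_diff_eq)
  moreover have "measure_pmf.prob (layer_run m N Y K \<delta> Wt n) (UNIV - {Q. \<forall>j<n. \<not> bad j (Q ! j)})
      = 1 - measure_pmf.prob (layer_run m N Y K \<delta> Wt n) {Q. \<forall>j<n. \<not> bad j (Q ! j)}"
    using measure_pmf.prob_compl by simp
  ultimately show ?thesis
    by linarith
qed

lemma is_aligned_residual:
  assumes "is_aligned m N X Xt w wt" "k < m"
  shows "(\<Sum>t<N. X k t * w t) - (\<Sum>t<N. Xt k t * q t) = (\<Sum>t<N. Xt k t * (wt t - q t))"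
proof -
  have "(\<Sum>t<N. X k t * w t) = (\<Sum>t<N. Xt k t * wt t)"
    using assms unfolding is_aligned_def by metis
  then show ?thesis
    by (simp add: sum_subtractf right_diff_distrib)
qed

lemma aligned_layer_error_le:
  assumes "N' \<ge> 1" and "\<forall>j<N'. is_aligned m N X Xt (\<lambda>t. W t j) (\<lambda>t. Wt t j)"
    and "\<forall>j<N'. sqrt (\<Sum>k<m. (\<Sum>t<N. Xt k t * (Wt t j - Q ! j ! t))\<^sup>2) \<le> bound"
  shows "Max ((\<lambda>j. sqrt (\<Sum>k<m. ((\<Sum>t<N. X k t * W t j) - (\<Sum>t<N. Xt k t * (Q ! j ! t)))\<^sup>2))
           ` {..<N'}) \<le> bound"
proof -
  have "(\<Sum>k<m. ((\<Sum>t<N. X k t * W t j) - (\<Sum>t<N. Xt k t * (Q ! j ! t)))\<^sup>2)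
      = (\<Sum>k<m. (\<Sum>t<N. Xt k t * (Wt t j - Q ! j ! t))\<^sup>2)" if "j < N'" for j
    using is_aligned_residual[OF assms(2)[rule_format, OF that], where q = "\<lambda>t. Q ! j ! t"]
    by (intro sum.cong) auto
  then show ?thesis
    using assms(1,3) by (simp add: Max_le_iff lessThan_empty_iff)
qed


theorem mainTheorem7:
  fixes m N N' p K :: nat and \<delta> :: real and X Xt W Wt :: "nat \<Rightarrow> nat \<Rightarrow> real"
  assumes "m \<ge> 1" and "N \<ge> 1" and "N' \<ge> 1" and "p \<ge> 3" and "\<delta> > 0"
    and "\<forall>t<N. \<exists>k<m. Xt k t \<noteq> 0"
    and "\<forall>j<N'. is_aligned m N X Xt (\<lambda>t. W t j) (\<lambda>t. Wt t j)"
    and "Max ((\<lambda>(t, j). \<bar>Wt t j\<bar>) ` ({..<N} \<times> {..<N'})) \<le> real K * \<delta> / 2"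
  shows "measure_pmf.prob (layer_run m N Xt K \<delta> Wt N')
           {Q. Max ((\<lambda>j. sqrt (\<Sum>k<m. ((\<Sum>t<N. X k t * W t j) - (\<Sum>t<N. Xt k t * (Q ! j ! t)))\<^sup>2))
                    ` {..<N'})
               \<le> \<delta> * sqrt (2 * pi * real p * real m * ln (real N)) * Max ((\<lambda>j. col_norm m Xt j) ` {..<N})}
         \<ge> 1 - sqrt 2 * real m * real N' / real N ^ p
             - sqrt 2 * real N' * (\<Sum>t\<in>{1..<N}.
                 exp (- ((real K)\<^sup>2 * col_sqnorm m Xt t)
                        / (8 * pi * Max ((\<lambda>j. col_sqnorm m Xt j) ` {..<t}))))"
proof -
  have path_following: "stochastic_path_following \<delta>"
    using assms(5) by unfold_locales
  define bound where
    "bound = \<delta> * sqrt (2 * pi * real p * real m * ln (real N)) * Max (col_norm m Xt ` {..<N})"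
  define C where "C = sqrt 2 * real m / real N ^ p + sqrt 2 * (\<Sum>t\<in>{1..<N}.
    exp (- ((real K)\<^sup>2 * col_sqnorm m Xt t) / (8 * pi * Max (col_sqnorm m Xt ` {..<t}))))"
  define bad where "bad j q \<longleftrightarrow> bound < sqrt (\<Sum>k<m. (\<Sum>t<N. Xt k t * (Wt t j - q ! t))\<^sup>2)" for j q
  have pos: "\<forall>t<N. col_sqnorm m Xt t > 0"
    using assms(6) col_sqnorm_pos by blast
  have "measure_pmf.prob (quantize_column m N Xt K \<delta> (\<lambda>t. Wt t j)) {q. bad j q} \<le> C"
    if "j < N'" for j
  proof -
    have "\<bar>Wt t j\<bar> \<le> Max ((\<lambda>(t, j). \<bar>Wt t j\<bar>) ` ({..<N} \<times> {..<N'}))" if "t < N" for t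
      using \<open>j < N'\<close> that by (intro Max_ge) auto
    then show ?thesis
      using stochastic_path_following.column_error_tail[OF path_following assms(2) pos, of "\<lambda>t. Wt t j" K p]
        assms(8)
      unfolding bad_def bound_def C_def stochastic_path_following.sat_exponent_def[OF path_following]
      by fastforce
  qed
  then have "1 - real N' * C \<le> measure_pmf.prob (layer_run m N Xt K \<delta> Wt N') {Q. \<forall>j<N'. \<not> bad j (Q ! j)}"
    by (rule layer_run_all_good)
  also have "\<dots> \<le> measure_pmf.prob (layer_run m N Xt K \<delta> Wt N')
      {Q. Max ((\<lambda>j. sqrt (\<Sum>k<m. ((\<Sum>t<N. X k t * W t j) - (\<Sum>t<N. Xt k t * (Q ! j ! t)))\<^sup>2))
                    ` {..<N'}) \<le> bound}"
    using aligned_layer_error_le[OF assms(3,7)]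
    by (intro measure_pmf.finite_measure_mono) (auto simp: bad_def not_less)
  finally show ?thesis
    unfolding C_def bound_def by (simp add: algebra_simps)
qed

end
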